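(* Let $q>0$, and let $\mathbf m$, $\mathbf n$ be proper paths for $q$ with $c(q,\mathbf m)=c(q,\mathbf n)$. Then there is a proper loop $\mathbf u$ for $q$ such that $\mathbf m=(\mathbf u\mathbf n)^*$. Moreover, $\mathbf u$ is different from the trivial loop $(0)$ if and only if $\mathbf m\ne\mathbf n$.
   Context: Let $q>0$. For $k\ge0$ and $\mathbf m=(m_0,\dots,m_k)\in\mathbb Z^{k+1}$ put $\mathbf m_j=(m_0,\dots,m_j)$; define $c(q,\mathbf m_0)=m_0$ and $c(q,\mathbf m_j)=m_j+\frac{1}{q\,c(q,\mathbf m_{j-1})}$ for $1\le j\le k$. $\mathbf m$ is a path for $q$ of length $k$ if $c(q,\mathbf m_j)\ne0$ for $0\le j\le k-1$; it is proper if $m_j\ne0$ for $0\le j\le k-1$. A loop is a path with $c(q,\mathbf m)=0$; $(0)$ is the trivial loop. The composition of $\mathbf u=(u_0,\dots,u_k)$ and $\mathbf n=(n_0,\dots,n_\ell)$ is $\mathbf u\mathbf n=(u_0,\dots,u_{k-1},u_k+n_0,n_1,\dots,n_\ell)$. Zero-skipping: for a path with an entry $m_j=0$, $1\le j\le k-1$, replace $(\dots,m_{j-1},0,m_{j+1},\dots)$ by $(\dots,m_{j-1}+m_{j+1},\dots)$ (this does not change $c(q,\cdot)$); repeating this until no such interior zero remains gives a proper path denoted $\mathbf m^*$. *)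

theory Defs
  imports Main "HOL.Real"
begin

text \<open>A vector m = (m_0,...,m_k) is represented by a nonempty list of integers.
  cval q m is c(q, m): c(q,(m_0)) = m_0, c(q, m_j) = m_j + 1/(q c(q, m_{j-1})).\<close>

fun cval_aux :: "real \<Rightarrow> real \<Rightarrow> int list \<Rightarrow> real" where
  "cval_aux q acc [] = acc"
| "cval_aux q acc (x # xs) = cval_aux q (of_int x + 1 / (q * acc)) xs"

definition cval :: "real \<Rightarrow> int list \<Rightarrow> real" where
  "cval q m = cval_aux q (of_int (hd m)) (tl m)"

definition is_path :: "real \<Rightarrow> int list \<Rightarrow> bool" where
  "is_path q m \<longleftrightarrow> m \<noteq> [] \<and> (\<forall>j. j + 1 < length m \<longrightarrow> cval q (take (j + 1) m) \<noteq> 0)"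

definition proper_path :: "real \<Rightarrow> int list \<Rightarrow> bool" where
  "proper_path q m \<longleftrightarrow> is_path q m \<and> (\<forall>j. j + 1 < length m \<longrightarrow> m ! j \<noteq> 0)"

definition is_loop :: "real \<Rightarrow> int list \<Rightarrow> bool" where
  "is_loop q m \<longleftrightarrow> is_path q m \<and> cval q m = 0"

definition compose :: "int list \<Rightarrow> int list \<Rightarrow> int list" where
  "compose u n = butlast u @ [last u + hd n] @ tl n"

inductive zskip_step :: "int list \<Rightarrow> int list \<Rightarrow> bool" where
  "zskip_step (xs @ [a, 0, b] @ ys) (xs @ [a + b] @ ys)"

definition no_interior_zero :: "int list \<Rightarrow> bool" where
  "no_interior_zero m \<longleftrightarrow> (\<forall>j. 1 \<le> j \<and> j + 1 < length m \<longrightarrow> m ! j \<noteq> 0)"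

text \<open>zs_star x y: y is x^*, i.e. y arises from x by repeated zero-skipping until
  no interior zero remains.\<close>
definition zs_star :: "int list \<Rightarrow> int list \<Rightarrow> bool" where
  "zs_star x y \<longleftrightarrow> zskip_step\<^sup>*\<^sup>* x y \<and> no_interior_zero y"

end

theory Submission
  imports Defs
begin

text \<open>If the last entries of m and n agree and n has length at least two, drop them:
  since c(q, (x, a)) = a + 1/(q c(q, x)) determines c(q, x), the shortened paths are again proper
  with equal values, and a loop for them also works for m and n. Otherwise take u = m n^-1 with
  n^-1 = (-n_l, ..., -n_0). After m with its last entry lowered by n_l the value is
  c(q, m) - n_l = 1/(q c(q, (n_0, ..., n_(l-1)))), and each further entry -n_j peels one step off
  this continued fraction, ending at 0; so u is a proper loop. In u n the block n^-1 n is
  (..., -n_1, 0, n_1, ...), which zero-skipping folds up from the middle, leaving m.\<close>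

lemma cval_singleton [simp]: "cval q [x] = of_int x"
  by (simp add: cval_def)

lemma cval_aux_snoc: "cval_aux q c (xs @ [x]) = of_int x + 1 / (q * cval_aux q c xs)"
  by (induction xs arbitrary: c) auto

lemma cval_snoc: "xs \<noteq> [] \<Longrightarrow> cval q (xs @ [x]) = of_int x + 1 / (q * cval q xs)"
  by (cases xs) (auto simp: cval_def cval_aux_snoc)

lemma cval_snoc_diff: "cval q (xs @ [x - d]) = cval q (xs @ [x]) - of_int d"
  by (cases "xs = []") (auto simp: cval_snoc)

lemma is_path_snoc_iff:
  "is_path q (xs @ [x]) \<longleftrightarrow> xs = [] \<or> is_path q xs \<and> cval q xs \<noteq> 0"
proof -
  have "is_path q (xs @ [x]) \<longleftrightarrow> (\<forall>j. j + 1 \<le> length xs \<longrightarrow> cval q (take (j + 1) xs) \<noteq> 0)"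
    by (auto simp: is_path_def)
  also have "\<dots> \<longleftrightarrow> xs = [] \<or> is_path q xs \<and> cval q xs \<noteq> 0"
    by (cases xs) (auto simp: is_path_def le_less)
  finally show ?thesis .
qed

lemma proper_path_iff: "proper_path q m \<longleftrightarrow> is_path q m \<and> 0 \<notin> set (butlast m)"
  by (auto simp: proper_path_def in_set_conv_nth nth_butlast)

lemma proper_path_nonempty: "proper_path q m \<Longrightarrow> m \<noteq> []"
  by (simp add: proper_path_def is_path_def)

lemma proper_path_no_interior_zero: "proper_path q m \<Longrightarrow> no_interior_zero m"
  by (auto simp: proper_path_def no_interior_zero_def)

lemma proper_path_snocD: "proper_path q (xs @ [x]) \<Longrightarrow> xs \<noteq> [] \<Longrightarrow> proper_path q xs"
  by (auto simp: proper_path_iff is_path_snoc_iff butlast_append dest: in_set_butlastD)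

lemma cval_snoc_eq_cancel:
  assumes "q \<noteq> 0" "is_path q (ys @ [a])" "ys \<noteq> []" "cval q (xs @ [a]) = cval q (ys @ [a])"
  shows "xs \<noteq> [] \<and> cval q xs = cval q ys"
proof -
  have ys: "cval q ys \<noteq> 0"
    using assms(2,3) by (simp add: is_path_snoc_iff)
  show ?thesis
  proof (cases "xs = []")
    case True
    then show ?thesis using assms(1,3,4) ys by (simp add: cval_snoc)
  next
    case False
    then show ?thesis using assms(1,3,4) ys by (simp add: cval_snoc field_simps)
  qed
qed

definition path_inverse :: "int list \<Rightarrow> int list" where
  "path_inverse n = map uminus (rev n)"

lemma path_inverse_Nil [simp]: "path_inverse [] = []"
  and path_inverse_snoc [simp]: "path_inverse (xs @ [x]) = - x # path_inverse xs"
  and path_inverse_Cons [simp]: "path_inverse (x # xs) = path_inverse xs @ [- x]"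
  by (simp_all add: path_inverse_def)

lemma cval_append_path_inverse:
  assumes "q \<noteq> 0" "z \<noteq> []" "p \<noteq> []" "cval q p = 1 / (q * cval q (z @ ys))"
  shows "cval q (p @ path_inverse ys) = 1 / (q * cval q z)"
  using assms(3,4)
proof (induction ys arbitrary: p rule: rev_induct)
  case (snoc y ys)
  have "cval q (p @ [- y]) = 1 / (q * cval q (z @ ys))"
    using snoc.prems assms(1,2) cval_snoc[of "z @ ys" q y] by (simp add: cval_snoc)
  then show ?case
    using snoc.IH[of "p @ [- y]"] by simp
qed simp

lemma is_path_append_path_inverse:
  assumes "q \<noteq> 0" "z \<noteq> []" "is_path q p" "is_path q (z @ ys)" "cval q (z @ ys) \<noteq> 0"
    "cval q p = 1 / (q * cval q (z @ ys))"
  shows "is_path q (p @ path_inverse ys @ [x])"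
  using assms(3-6)
proof (induction ys arbitrary: p rule: rev_induct)
  case Nil
  then show ?case using assms(1) by (simp add: is_path_snoc_iff)
next
  case (snoc y ys)
  have zys: "is_path q (z @ ys)" "cval q (z @ ys) \<noteq> 0"
    using snoc.prems(2) assms(2) by (simp_all add: is_path_snoc_iff flip: append_assoc)
  have "is_path q (p @ [- y])"
    using snoc.prems(1,3,4) assms(1) by (simp add: is_path_snoc_iff)
  moreover have "cval q (p @ [- y]) = 1 / (q * cval q (z @ ys))"
    using snoc.prems(1,4) assms(1,2) cval_snoc[of "z @ ys" q y] by (simp add: cval_snoc is_path_def)
  ultimately show ?case
    using snoc.IH[of "p @ [- y]"] zys by simp
qed

lemma singleton_or_Cons_snoc_cases:
  assumes "xs \<noteq> []"
  obtains x where "xs = [x]" | y ys x where "xs = y # ys @ [x]"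
  using assms by (metis append_butlast_last_id list.exhaust)

lemma compose_snoc: "n \<noteq> [] \<Longrightarrow> compose u (n @ [b]) = compose u n @ [b]"
  by (cases n) (auto simp: compose_def)

lemma compose_path_inverse_eq_trivial_loop_iff:
  "m \<noteq> [] \<Longrightarrow> n \<noteq> [] \<Longrightarrow> compose m (path_inverse n) = [0] \<longleftrightarrow> m = n \<and> length n = 1"
  by (cases m rule: singleton_or_Cons_snoc_cases; cases n rule: singleton_or_Cons_snoc_cases)
    (auto simp: compose_def)

lemma zskip_step_append: "zskip_step x y \<Longrightarrow> zskip_step (x @ z) (y @ z)"
  by (induction rule: zskip_step.induct) (metis append.assoc zskip_step.intros)

lemma zskip_star_append: "zskip_step\<^sup>*\<^sup>* x y \<Longrightarrow> zskip_step\<^sup>*\<^sup>* (x @ z) (y @ z)"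
  by (induction rule: rtranclp_induct) (auto intro: rtranclp.rtrancl_into_rtrancl zskip_step_append)

lemma zskip_star_cancel_path_inverse:
  "zskip_step\<^sup>*\<^sup>* (xs @ path_inverse ys @ [0] @ ys @ zs) (xs @ [0] @ zs)"
proof (induction ys)
  case (Cons y ys)
  have "zskip_step (xs @ path_inverse (y # ys) @ [0] @ (y # ys) @ zs)
      (xs @ path_inverse ys @ [0] @ ys @ zs)"
    using zskip_step.intros[of "xs @ path_inverse ys" "- y" y "ys @ zs"] by simp
  then show ?case
    using Cons.IH by (rule converse_rtranclp_into_rtranclp)
qed simp

lemma zskip_star_compose_path_inverse:
  assumes "m \<noteq> []" "n \<noteq> []"
  shows "zskip_step\<^sup>*\<^sup>* (compose (compose m (path_inverse n)) n) m"
proof -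
  obtain xs a where m: "m = xs @ [a]"
    using assms(1) rev_exhaust by blast
  from assms(2) show ?thesis
  proof (cases rule: singleton_or_Cons_snoc_cases)
    case (1 b)
    then show ?thesis by (simp add: m compose_def)
  next
    case (2 y ys b)
    have "compose (compose m (path_inverse n)) n
        = (xs @ [a - b]) @ path_inverse ys @ [0] @ ys @ [b]"
      by (simp add: m 2 compose_def butlast_append)
    also have "zskip_step\<^sup>*\<^sup>* \<dots> (xs @ [a - b] @ [0] @ [b])"
      using zskip_star_cancel_path_inverse[of "xs @ [a - b]" ys "[b]"] by simp
    also have "zskip_step \<dots> m"
      using zskip_step.intros[of xs "a - b" b "[]"] by (simp add: m)
    finally show ?thesis by simp
  qed
qed

lemma proper_loop_compose_path_inverse:
  assumes "q \<noteq> 0" "proper_path q m" "proper_path q n" "cval q m = cval q n"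
    and "length n = 1 \<or> last m \<noteq> last n"
  shows "proper_path q (compose m (path_inverse n)) \<and> is_loop q (compose m (path_inverse n))"
proof -
  obtain xs a where m: "m = xs @ [a]"
    using proper_path_nonempty[OF assms(2)] rev_exhaust by blast
  have xs0: "0 \<notin> set xs"
    using assms(2) by (simp add: proper_path_iff m)
  have path_xs: "is_path q (xs @ [c])" for c
    using assms(2) by (simp add: proper_path_iff m is_path_snoc_iff)
  from proper_path_nonempty[OF assms(3)] show ?thesis
  proof (cases rule: singleton_or_Cons_snoc_cases)
    case (1 b)
    have "compose m (path_inverse n) = xs @ [a - b]"
      by (simp add: m 1 compose_def)
    moreover have "cval q (xs @ [a - b]) = 0"
      using assms(4) by (simp add: cval_snoc_diff m 1)
    ultimately show ?thesis
      using path_xs xs0 by (simp add: proper_path_iff is_loop_def)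
  next
    case (2 y ys b)
    have "a \<noteq> b"
      using assms(5) by (simp add: m 2)
    have path_y_ys: "is_path q (y # ys)" "cval q (y # ys) \<noteq> 0"
      using assms(3) by (simp_all add: 2 proper_path_iff is_path_snoc_iff flip: append_Cons)
    have y_ys0: "0 \<notin> set (y # ys)"
      using assms(3) by (simp add: 2 proper_path_iff butlast_append)
    have c: "cval q (xs @ [a - b]) = 1 / (q * cval q (y # ys))"
      using assms(4) cval_snoc[of "y # ys" q b] by (simp add: cval_snoc_diff m 2)
    have u: "compose m (path_inverse n) = (xs @ [a - b]) @ path_inverse ys @ [- y]"
      by (simp add: m 2 compose_def)
    have "is_path q (compose m (path_inverse n))"
      unfolding u using is_path_append_path_inverse[of q "[y]" "xs @ [a - b]" ys] path_xs path_y_ys c assms(1)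
      by simp
    moreover have "cval q (compose m (path_inverse n)) = 0"
    proof -
      have "cval q ((xs @ [a - b]) @ path_inverse ys) = 1 / (q * y)"
        using cval_append_path_inverse[of q "[y]" "xs @ [a - b]" ys] c assms(1) by simp
      then show ?thesis
        using assms(1) by (simp add: u cval_snoc flip: append_assoc)
    qed
    moreover have "0 \<notin> set (butlast (compose m (path_inverse n)))"
      unfolding u using xs0 y_ys0 \<open>a \<noteq> b\<close> by (auto simp: butlast_append path_inverse_def)
    ultimately show ?thesis
      by (simp add: proper_path_iff is_loop_def)
  qed
qed

lemma proper_paths_drop_common_last:
  assumes "q \<noteq> 0" "proper_path q m" "proper_path q n" "cval q m = cval q n"
    and "length n \<noteq> 1" "last m = last n"
  obtains xs ys a where "m = xs @ [a]" "n = ys @ [a]"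
    "proper_path q xs" "proper_path q ys" "cval q xs = cval q ys"
proof -
  have m: "m = butlast m @ [last n]" and n: "n = butlast n @ [last n]"
    using assms(2,3,6) by (metis append_butlast_last_id proper_path_nonempty)+
  have "butlast n \<noteq> []"
    using assms(5) n by (cases n) auto
  moreover have "butlast m \<noteq> []" "cval q (butlast m) = cval q (butlast n)"
    using cval_snoc_eq_cancel[of q "butlast n" "last n" "butlast m"] assms(1,3,4) m n
      \<open>butlast n \<noteq> []\<close> by (auto simp: proper_path_iff)
  ultimately show ?thesis
    using that m n assms(2,3) by (metis proper_path_snocD)
qed

theorem lemma3:
  fixes q :: real and m n :: "int list"
  assumes "q > 0"
    and "proper_path q m" and "proper_path q n"
    and "cval q m = cval q n"
  shows "\<exists>u. proper_path q u \<and> is_loop q u \<and> zs_star (compose u n) m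
             \<and> (u \<noteq> [0] \<longleftrightarrow> m \<noteq> n)"
  using assms
proof (induction "length m" arbitrary: m n rule: less_induct)
  case less
  have q: "q \<noteq> 0"
    using less.prems(1) by simp
  have m: "m \<noteq> []" and n: "n \<noteq> []"
    using less.prems(2,3) by (simp_all add: proper_path_nonempty)
  have "no_interior_zero m"
    using less.prems(2) by (rule proper_path_no_interior_zero)
  show ?case
  proof (cases "length n = 1 \<or> last m \<noteq> last n")
    case True
    let ?u = "compose m (path_inverse n)"
    have "zskip_step\<^sup>*\<^sup>* (compose ?u n) m"
      using m n by (rule zskip_star_compose_path_inverse)
    moreover have "?u \<noteq> [0] \<longleftrightarrow> m \<noteq> n"
      using True compose_path_inverse_eq_trivial_loop_iff[OF m n] by auto
    ultimately show ?thesis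
      using proper_loop_compose_path_inverse[OF q less.prems(2-4) True] \<open>no_interior_zero m\<close>
      by (auto simp: zs_star_def)
  next
    case False
    obtain xs ys a where xs: "m = xs @ [a]" and ys: "n = ys @ [a]"
      and shorter: "proper_path q xs" "proper_path q ys" "cval q xs = cval q ys"
      using proper_paths_drop_common_last[OF q less.prems(2-4)] False by blast
    obtain u where u: "proper_path q u" "is_loop q u" "zs_star (compose u ys) xs"
        "u \<noteq> [0] \<longleftrightarrow> xs \<noteq> ys"
      using less.hyps[of xs ys] less.prems(1) shorter by (auto simp: xs)
    have "zskip_step\<^sup>*\<^sup>* (compose u n) m"
      using zskip_star_append[of "compose u ys" xs "[a]"] u(3) proper_path_nonempty[OF shorter(2)]
      by (simp add: zs_star_def compose_snoc xs ys)
    then show ?thesis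
      using u \<open>no_interior_zero m\<close> by (auto simp: zs_star_def xs ys)
  qed
qed

end
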